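(* Let $\mathbf{y}\in\mathbb{R}^{2s}$ be an arbitrary $s$-sparse vector. Then for all $\mathbf{x}\in\mathbb{R}^{2s}$, \[ \|\mathbf{x}^s-\mathbf{y}\|_2\le\sqrt3\,\|\mathbf{x}-\mathbf{y}\|_2 . \]
   Context: $\mathbf{x}^s$ denotes $\mathbf{x}$ with all but its $s$ largest-magnitude entries set to zero; a vector is $s$-sparse if it has at most $s$ nonzero entries. *)

theory Defs
  imports Complex_Main
begin

text \<open>Vectors in R^n are modelled as functions nat => real, only indices below n matter.\<close>

definition l2norm :: "nat \<Rightarrow> (nat \<Rightarrow> real) \<Rightarrow> real" where
  "l2norm n x = sqrt (\<Sum>i<n. (x i)^2)"

definition is_sparse :: "nat \<Rightarrow> nat \<Rightarrow> (nat \<Rightarrow> real) \<Rightarrow> bool" where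
  "is_sparse n s y \<longleftrightarrow> card {i. i < n \<and> y i \<noteq> 0} \<le> s"

definition is_top_set :: "nat \<Rightarrow> nat \<Rightarrow> (nat \<Rightarrow> real) \<Rightarrow> nat set \<Rightarrow> bool" where
  "is_top_set n s x S \<longleftrightarrow> S \<subseteq> {..<n} \<and> card S = s \<and>
     (\<forall>i\<in>S. \<forall>j\<in>{..<n} - S. \<bar>x j\<bar> \<le> \<bar>x i\<bar>)"

definition keep :: "nat set \<Rightarrow> (nat \<Rightarrow> real) \<Rightarrow> nat \<Rightarrow> real" where
  "keep S x = (\<lambda>i. if i \<in> S then x i else 0)"

end

theory Submission
  imports Defs
begin

text \<open>Let T be the support of y. On S the vector x^s agrees with x, so there the error equals
that of x; off S the error is y itself, which lives on T - S. There y^2 \<le> 2(x - y)^2 + 2x^2,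
and since card (T - S) \<le> card (S - T) while every |x| on T - S is dominated by every |x| on
S - T, the mass of x^2 on T - S is at most that on S - T, where y vanishes and x^2 = (x - y)^2.
Altogether the squared error of x^s is at most 3 times that of x on S plus 2 times that off S.
Nothing depends on the ambient dimension being 2s.\<close>

lemma sum_le_sum_if_card_le_and_dominated:
  fixes f :: "'a \<Rightarrow> 'b :: linordered_semidom"
  assumes "finite B" "card A \<le> card B"
    and "\<And>a b. a \<in> A \<Longrightarrow> b \<in> B \<Longrightarrow> f a \<le> f b"
    and "\<And>b. b \<in> B \<Longrightarrow> 0 \<le> f b"
  shows "sum f A \<le> sum f B"
proof (cases "finite A \<and> A \<noteq> {}")
  case False
  then show ?thesis using assms(4) by (auto simp: sum_nonneg)
next
  case True
  then have "B \<noteq> {}" using assms(2) by auto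
  define c where "c = Min (f ` B)"
  have c_in: "c \<in> f ` B" using \<open>finite B\<close> \<open>B \<noteq> {}\<close> unfolding c_def by (intro Min_in) auto
  have "sum f A \<le> of_nat (card A) * c"
    using sum_bounded_above[of A f c] assms(3) c_in by auto
  also have "\<dots> \<le> of_nat (card B) * c"
    using assms(2,4) c_in by (auto intro: mult_right_mono)
  also have "\<dots> \<le> sum f B"
    using sum_bounded_below[of B c f] \<open>finite B\<close> by (simp add: c_def)
  finally show ?thesis .
qed

lemma square_le_twice_square_diff_plus_twice_square:
  fixes x y :: real
  shows "y\<^sup>2 \<le> 2 * (x - y)\<^sup>2 + 2 * x\<^sup>2"
  using sum_squares_ge_zero[of "2 * x - y" 0] by (simp add: power2_eq_square algebra_simps)

lemma sum_square_keep_diff: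
  assumes "S \<subseteq> N" "finite N"
  shows "(\<Sum>i\<in>N. (keep S x i - y i)\<^sup>2) = (\<Sum>i\<in>S. (x i - y i)\<^sup>2) + (\<Sum>i\<in>N - S. (y i)\<^sup>2)"
proof -
  have "(\<Sum>i\<in>N. (keep S x i - y i)\<^sup>2)
      = (\<Sum>i\<in>N - S. (keep S x i - y i)\<^sup>2) + (\<Sum>i\<in>S. (keep S x i - y i)\<^sup>2)"
    using sum.subset_diff[OF assms] by simp
  then show ?thesis by (simp add: keep_def add.commute)
qed

lemma top_set_dominates_sparse_support:
  assumes "is_sparse n s y" "is_top_set n s x S"
  defines "T \<equiv> {i. i < n \<and> y i \<noteq> 0}"
  shows "(\<Sum>i\<in>T - S. (x i)\<^sup>2) \<le> (\<Sum>i\<in>S - T. (x i)\<^sup>2)"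
proof (rule sum_le_sum_if_card_le_and_dominated)
  have "S \<subseteq> {..<n}" "card S = s" "card T \<le> s"
    using assms unfolding is_top_set_def is_sparse_def T_def by auto
  then show "finite (S - T)" "card (T - S) \<le> card (S - T)"
    by (auto intro!: card_le_sym_Diff simp: T_def finite_subset)
  show "(x a)\<^sup>2 \<le> (x b)\<^sup>2" if "a \<in> T - S" "b \<in> S - T" for a b
    using assms(2) that unfolding is_top_set_def T_def by (auto simp: abs_le_square_iff)
qed simp

lemma sum_square_off_top_set_le:
  assumes "is_sparse n s y" "is_top_set n s x S"
  shows "(\<Sum>i\<in>{..<n} - S. (y i)\<^sup>2)
    \<le> 2 * (\<Sum>i\<in>{..<n} - S. (x i - y i)\<^sup>2) + 2 * (\<Sum>i\<in>S. (x i - y i)\<^sup>2)"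
proof -
  define T where "T = {i. i < n \<and> y i \<noteq> 0}"
  have S_sub: "S \<subseteq> {..<n}" using assms(2) by (simp add: is_top_set_def)
  have fin: "finite S" "finite T" using S_sub by (auto simp: T_def finite_subset)
  have "(\<Sum>i\<in>{..<n} - S. (y i)\<^sup>2) = (\<Sum>i\<in>T - S. (y i)\<^sup>2)"
    by (rule sum.mono_neutral_right) (auto simp: T_def)
  also have "\<dots> \<le> (\<Sum>i\<in>T - S. 2 * (x i - y i)\<^sup>2 + 2 * (x i)\<^sup>2)"
    by (intro sum_mono square_le_twice_square_diff_plus_twice_square)
  also have "\<dots> = 2 * (\<Sum>i\<in>T - S. (x i - y i)\<^sup>2) + 2 * (\<Sum>i\<in>T - S. (x i)\<^sup>2)"
    by (simp add: sum.distrib sum_distrib_left)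
  also have "(\<Sum>i\<in>T - S. (x i - y i)\<^sup>2) \<le> (\<Sum>i\<in>{..<n} - S. (x i - y i)\<^sup>2)"
    by (rule sum_mono2) (auto simp: T_def)
  also have "(\<Sum>i\<in>T - S. (x i)\<^sup>2) \<le> (\<Sum>i\<in>S - T. (x i)\<^sup>2)"
    using top_set_dominates_sparse_support[OF assms] by (simp add: T_def)
  also have "\<dots> = (\<Sum>i\<in>S - T. (x i - y i)\<^sup>2)"
    using S_sub by (intro sum.cong) (auto simp: T_def)
  also have "\<dots> \<le> (\<Sum>i\<in>S. (x i - y i)\<^sup>2)"
    using fin by (intro sum_mono2) auto
  finally show ?thesis by simp
qed

lemma sum_square_keep_top_diff_le:
  assumes "is_sparse n s y" "is_top_set n s x S"
  shows "(\<Sum>i<n. (keep S x i - y i)\<^sup>2) \<le> 3 * (\<Sum>i<n. (x i - y i)\<^sup>2)"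
proof -
  have S_sub: "S \<subseteq> {..<n}" using assms(2) by (simp add: is_top_set_def)
  have "(\<Sum>i<n. (x i - y i)\<^sup>2) = (\<Sum>i\<in>S. (x i - y i)\<^sup>2) + (\<Sum>i\<in>{..<n} - S. (x i - y i)\<^sup>2)"
    using sum.subset_diff[OF S_sub] by (simp add: add.commute)
  moreover have "0 \<le> (\<Sum>i\<in>{..<n} - S. (x i - y i)\<^sup>2)"
    by (simp add: sum_nonneg)
  ultimately show ?thesis
    using sum_square_keep_diff[OF S_sub] sum_square_off_top_set_le[OF assms] by simp
qed

theorem proposition5:
  fixes s :: nat and x y :: "nat \<Rightarrow> real" and S :: "nat set"
  assumes "is_sparse (2 * s) s y"
    and "is_top_set (2 * s) s x S"
  shows "l2norm (2 * s) (\<lambda>i. keep S x i - y i) \<le> sqrt 3 * l2norm (2 * s) (\<lambda>i. x i - y i)"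
  using sum_square_keep_top_diff_le[OF assms]
  by (simp add: l2norm_def real_sqrt_mult[symmetric])

end
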